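(* Let $r\in\mathfrak L\otimes\mathfrak L$ be such that $\omega\cdot r\in\mathrm{Im}(1-\tau)$ for all $\omega\in\mathfrak L$. Then $r\in\mathrm{Im}(1-\tau)+\mathcal C\otimes\mathcal C$, i.e. $r\in\mathrm{Im}(1-\tau)$ modulo $\mathcal C\otimes\mathcal C$.
   Context: Let $\mathbb F$ be a field of characteristic $0$ and let $\Gamma$ be an additive subgroup of $\mathbb F$ with $\mathbb Z\subseteq\Gamma$. The generalized Heisenberg–Virasoro algebra $\mathfrak L=\mathfrak L(\Gamma)$ is the Lie algebra over $\mathbb F$ with basis $\{L_x,I_x:x\in\Gamma\}\cup\{C_L,C_I,C_{LI}\}$ and brackets $[L_x,L_y]=(y-x)L_{x+y}+\delta_{x+y,0}\frac{1}{12}(x^3-x)C_L$, $[I_x,I_y]=y\,\delta_{x+y,0}C_I$, $[L_x,I_y]=yI_{x+y}+\delta_{x+y,0}(x^2-x)C_{LI}$, with $C_L,C_I,C_{LI}$ central. Its center is $\mathcal C=\mathrm{span}_{\mathbb F}\{I_0,C_L,C_I,C_{LI}\}$. $\mathfrak L$ acts on $\mathfrak L\otimes\mathfrak L$ by $\omega\cdot(a\otimes b)=[\omega,a]\otimes b+a\otimes[\omega,b]$. The twist map is $\tau(a\otimes b)=b\otimes a$, and $\mathrm{Im}(1-\tau)$ is the space of skew-symmetric tensors in $\mathfrak L\otimes\mathfrak L$. *)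

theory Defs
  imports Main
begin

text \<open>Basis of the generalized Heisenberg-Virasoro algebra: L_x, I_x (x in Gamma), C_L, C_I, C_LI.
  Elements of the algebra are finitely supported coefficient functions on this basis;
  elements of L (x) L are finitely supported coefficient functions on pairs of basis elements.\<close>

datatype 'a hvb = Lb 'a | Ib 'a | CL | CI | CLI

definition add_subgroup_Z :: "'a::field_char_0 set \<Rightarrow> bool" where
  "add_subgroup_Z G \<longleftrightarrow> 0 \<in> G \<and> (\<forall>x\<in>G. \<forall>y\<in>G. x + y \<in> G) \<and> (\<forall>x\<in>G. - x \<in> G)
     \<and> (\<forall>n::int. of_int n \<in> G)"

definition hv_basis :: "'a set \<Rightarrow> 'a hvb set" where
  "hv_basis G = Lb ` G \<union> Ib ` G \<union> {CL, CI, CLI}"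

definition hv_alg :: "'a::field set \<Rightarrow> ('a hvb \<Rightarrow> 'a) set" where
  "hv_alg G = {x. finite {b. x b \<noteq> 0} \<and> (\<forall>b. x b \<noteq> 0 \<longrightarrow> b \<in> hv_basis G)}"

definition hv_tens :: "'a::field set \<Rightarrow> ('a hvb \<times> 'a hvb \<Rightarrow> 'a) set" where
  "hv_tens G = {t. finite {p. t p \<noteq> 0} \<and> (\<forall>p. t p \<noteq> 0 \<longrightarrow> p \<in> hv_basis G \<times> hv_basis G)}"

definition ev :: "'b \<Rightarrow> 'b \<Rightarrow> 'a::field" where
  "ev b = (\<lambda>c. if c = b then 1 else 0)"

fun hv_brb :: "'a::field_char_0 hvb \<Rightarrow> 'a hvb \<Rightarrow> ('a hvb \<Rightarrow> 'a)" where
  "hv_brb (Lb x) (Lb y) = (\<lambda>c. (y - x) * ev (Lb (x + y)) c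
      + (if x + y = 0 then (x ^ 3 - x) / 12 else 0) * ev CL c)"
| "hv_brb (Ib x) (Ib y) = (\<lambda>c. (if x + y = 0 then y else 0) * ev CI c)"
| "hv_brb (Lb x) (Ib y) = (\<lambda>c. y * ev (Ib (x + y)) c
      + (if x + y = 0 then x ^ 2 - x else 0) * ev CLI c)"
| "hv_brb (Ib y) (Lb x) = (\<lambda>c. - (y * ev (Ib (x + y)) c
      + (if x + y = 0 then x ^ 2 - x else 0) * ev CLI c))"
| "hv_brb _ _ = (\<lambda>c. 0)"

definition hv_br :: "('a::field_char_0 hvb \<Rightarrow> 'a) \<Rightarrow> ('a hvb \<Rightarrow> 'a) \<Rightarrow> ('a hvb \<Rightarrow> 'a)" where
  "hv_br x y = (\<lambda>c. \<Sum>a\<in>{a. x a \<noteq> 0}. \<Sum>b\<in>{b. y b \<noteq> 0}. x a * y b * hv_brb a b c)"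

text \<open>omega . (a (x) b) = [omega,a] (x) b + a (x) [omega,b], extended linearly.\<close>
definition hv_act :: "('a::field_char_0 hvb \<Rightarrow> 'a) \<Rightarrow> ('a hvb \<times> 'a hvb \<Rightarrow> 'a) \<Rightarrow> ('a hvb \<times> 'a hvb \<Rightarrow> 'a)" where
  "hv_act w t = (\<lambda>(c, d). \<Sum>p\<in>{p. t p \<noteq> 0}. t p *
      (hv_br w (ev (fst p)) c * ev (snd p) d + ev (fst p) c * hv_br w (ev (snd p)) d))"

definition twist :: "('b \<times> 'b \<Rightarrow> 'a) \<Rightarrow> ('b \<times> 'b \<Rightarrow> 'a)" where
  "twist t = (\<lambda>(a, b). t (b, a))"

definition skew_im :: "'a::field set \<Rightarrow> ('a hvb \<times> 'a hvb \<Rightarrow> 'a) set" where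
  "skew_im G = {(\<lambda>p. s p - twist s p) | s. s \<in> hv_tens G}"

text \<open>Basis of the center C = span{I_0, C_L, C_I, C_LI}; C (x) C = tensors supported on pairs of these.\<close>
definition center_basis :: "'a::zero hvb set" where
  "center_basis = {Ib 0, CL, CI, CLI}"

definition CC_tens :: "'a::field set \<Rightarrow> ('a hvb \<times> 'a hvb \<Rightarrow> 'a) set" where
  "CC_tens G = {t \<in> hv_tens G. \<forall>p. t p \<noteq> 0 \<longrightarrow> p \<in> center_basis \<times> center_basis}"

end

theory Submission
  imports Defs
begin

(* Write r(a,b) for the coefficient of a (x) b in r.  Every tensor splits as
     r = (s - tau s) + c   with   s = r/2   and   c = (r + tau r)/2,
   so it suffices to show that the symmetric part r(a,b) + r(b,a) vanishes whenever the
   basis element a is not central (i.e. a = L_x, or a = I_x with x <> 0).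
   For such a, pick an integer z (so L_z lies in the algebra) with z <> x such that
   L_(x+z) and I_(x+z) occur in no basis pair of the support of r.  Put c = L_(x+z)
   resp. c = I_(x+z).  Then [L_z, e] has a c-component only for e = a, with coefficient
   k = x - z resp. k = x, both nonzero; hence the (c,b)- and (b,c)-coefficients of
   L_z . r are k r(a,b) and k r(b,a). *)

text \<open>In characteristic 0 the integers are infinite, so they avoid any finite set.\<close>
lemma int_avoiding_finite:
  assumes "finite (F :: 'a::ring_char_0 set)"
  obtains n :: int where "of_int n \<notin> F"
proof -
  have "finite ((of_int :: int \<Rightarrow> 'a) -` F)"
    using assms by (rule finite_vimageI) (simp add: inj_def)
  then show ?thesis
    using that infinite_UNIV_int by (metis UNIV_I finite_subset subsetI vimageI)
qed

lemma hv_br_basis: "hv_br (ev a) (ev b) = hv_brb a b"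
proof -
  have "\<And>e. {a'. (ev e a' :: 'a) \<noteq> 0} = {e}" by (auto simp: ev_def)
  then show ?thesis by (simp add: hv_br_def ev_def)
qed

lemma ev_in_hv_alg:
  assumes "b \<in> hv_basis G"
  shows "ev b \<in> hv_alg G"
proof -
  have "{c. (ev b c :: 'a) \<noteq> 0} = {b}" by (auto simp: ev_def)
  then show ?thesis using assms by (auto simp: hv_alg_def ev_def)
qed

lemma skew_im_antisym: "t \<in> skew_im G \<Longrightarrow> t (c, d) + t (d, c) = 0"
  by (auto simp: skew_im_def twist_def)

lemma act_at_fresh:
  fixes r :: "'a::field_char_0 hvb \<times> 'a hvb \<Rightarrow> 'a"
  assumes fin: "finite {p. r p \<noteq> 0}"
    and fresh: "\<And>p. r p \<noteq> 0 \<Longrightarrow> fst p \<noteq> c \<and> snd p \<noteq> c"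
    and profile: "\<And>e. hv_brb w e c = (if e = a then k else 0)"
  shows "hv_act (ev w) r (c, d) = k * r (a, d)"
    and "hv_act (ev w) r (d, c) = k * r (d, a)"
proof -
  let ?term = "\<lambda>(u, v) p. r p * (hv_brb w (fst p) u * ev (snd p) v + ev (fst p) u * hv_brb w (snd p) v)"
  have act: "hv_act (ev w) r (u, v) = (\<Sum>p\<in>{p. r p \<noteq> 0}. ?term (u, v) p)" for u v
    by (simp add: hv_act_def hv_br_basis)
  have "?term (c, d) p = (if p = (a, d) then k * r (a, d) else 0)" if "r p \<noteq> 0" for p
    using fresh[OF that] by (cases p) (auto simp: profile ev_def)
  then have "hv_act (ev w) r (c, d) = (\<Sum>p\<in>{p. r p \<noteq> 0}. if p = (a, d) then k * r (a, d) else 0)"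
    unfolding act by (intro sum.cong) auto
  then show "hv_act (ev w) r (c, d) = k * r (a, d)" using fin by simp
  have "?term (d, c) p = (if p = (d, a) then k * r (d, a) else 0)" if "r p \<noteq> 0" for p
    using fresh[OF that] by (cases p) (auto simp: profile ev_def)
  then have "hv_act (ev w) r (d, c) = (\<Sum>p\<in>{p. r p \<noteq> 0}. if p = (d, a) then k * r (d, a) else 0)"
    unfolding act by (intro sum.cong) auto
  then show "hv_act (ev w) r (d, c) = k * r (d, a)" using fin by simp
qed

lemma brb_profile_L:
  "hv_brb (Lb z) e (Lb (x + z)) = (if e = Lb x then x - z else 0)"
  by (cases e) (auto simp: ev_def algebra_simps)

lemma brb_profile_I:
  "hv_brb (Lb z) e (Ib (x + z)) = (if e = Ib x then x else 0)"
  by (cases e) (auto simp: ev_def algebra_simps)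

lemma symmetric_part_noncentral:
  fixes r :: "'a::field_char_0 hvb \<times> 'a hvb \<Rightarrow> 'a"
  assumes fin: "finite {p. r p \<noteq> 0}"
    and invariant: "\<forall>w\<in>hv_alg G. hv_act w r \<in> skew_im G"
    and ints: "\<forall>n::int. of_int n \<in> G"
    and noncentral: "a \<notin> center_basis"
  shows "r (a, b) + r (b, a) = 0"
proof -
  obtain x where a: "a = Lb x \<or> (a = Ib x \<and> x \<noteq> 0)"
    using noncentral by (cases a) (auto simp: center_basis_def)
  define labels where
    "labels = {y. \<exists>p. r p \<noteq> 0 \<and> (Lb y \<in> {fst p, snd p} \<or> Ib y \<in> {fst p, snd p})}"
  have "labels \<subseteq> (\<lambda>p. case p of (Lb y, _) \<Rightarrow> y | (Ib y, _) \<Rightarrow> y | _ \<Rightarrow> 0) ` {p. r p \<noteq> 0}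
      \<union> (\<lambda>p. case p of (_, Lb y) \<Rightarrow> y | (_, Ib y) \<Rightarrow> y | _ \<Rightarrow> 0) ` {p. r p \<noteq> 0}"
    unfolding labels_def by (auto intro: rev_image_eqI)
  moreover have "finite {p. r p \<noteq> 0}" by (fact fin)
  ultimately have "finite labels" by (auto intro: finite_subset)
  then have "finite (insert x ((\<lambda>y. y - x) ` labels))" by simp
  then obtain n :: int where n: "of_int n \<notin> insert x ((\<lambda>y. y - x) ` labels)"
    by (rule int_avoiding_finite)
  define z :: 'a where "z = of_int n"
  have zx: "z \<noteq> x" using n by (simp add: z_def)
  have fresh: "x + z \<notin> labels" using n by (force simp: z_def)
  obtain c k where
      profile: "\<And>e. hv_brb (Lb z) e c = (if e = a then k else 0)"
    and k: "k \<noteq> 0" and c: "c = Lb (x + z) \<or> c = Ib (x + z)"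
  proof (cases "a = Lb x")
    case True
    then show ?thesis using zx brb_profile_L[of z _ x] by (intro that[of "Lb (x + z)" "x - z"]) auto
  next
    case False
    then show ?thesis using a brb_profile_I[of z _ x] by (intro that[of "Ib (x + z)" x]) auto
  qed
  have c_fresh: "fst p \<noteq> c \<and> snd p \<noteq> c" if "r p \<noteq> 0" for p
  proof -
    have "Lb (x + z) \<notin> {fst p, snd p} \<and> Ib (x + z) \<notin> {fst p, snd p}"
      using fresh that unfolding labels_def by blast
    then show ?thesis using c by auto
  qed
  have "ev (Lb z) \<in> hv_alg G"
    using ints by (intro ev_in_hv_alg) (simp add: hv_basis_def z_def)
  then have "hv_act (ev (Lb z)) r \<in> skew_im G" using invariant by blast
  then have "hv_act (ev (Lb z)) r (c, b) + hv_act (ev (Lb z)) r (b, c) = 0"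
    by (rule skew_im_antisym)
  then have "k * (r (a, b) + r (b, a)) = 0"
    by (simp add: act_at_fresh[OF fin c_fresh profile] distrib_left)
  with k show ?thesis by simp
qed

lemma skew_plus_central:
  fixes r :: "'a::field_char_0 hvb \<times> 'a hvb \<Rightarrow> 'a"
  assumes G0: "0 \<in> G" and r: "r \<in> hv_tens G"
    and sym0: "\<And>a b. a \<notin> center_basis \<Longrightarrow> r (a, b) + r (b, a) = 0"
  shows "\<exists>s\<in>skew_im G. \<exists>c\<in>CC_tens G. r = (\<lambda>p. s p + c p)"
proof -
  have fin: "finite {p. r p \<noteq> 0}" and supp: "\<And>p. r p \<noteq> 0 \<Longrightarrow> p \<in> hv_basis G \<times> hv_basis G"
    using r by (auto simp: hv_tens_def)
  define s where "s = (\<lambda>p. r p / 2)"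
  define c where "c = (\<lambda>(a, b). (r (a, b) + r (b, a)) / 2)"
  have "s \<in> hv_tens G" using fin supp by (auto simp: hv_tens_def s_def)
  then have skew: "(\<lambda>p. s p - twist s p) \<in> skew_im G" unfolding skew_im_def by blast
  have "{p. c p \<noteq> 0} \<subseteq> {p. r p \<noteq> 0} \<union> prod.swap ` {p. r p \<noteq> 0}"
    by (force simp: c_def image_iff)
  then have c_fin: "finite {p. c p \<noteq> 0}" using fin finite_subset by blast
  have c_supp: "c p \<noteq> 0 \<Longrightarrow> p \<in> center_basis \<times> center_basis" for p
    using sym0[of "fst p" "snd p"] sym0[of "snd p" "fst p"]
    by (cases p) (auto simp: c_def add.commute)
  have "center_basis \<subseteq> hv_basis G" using G0 by (auto simp: center_basis_def hv_basis_def)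
  then have "c \<in> CC_tens G" using c_fin c_supp by (auto simp: CC_tens_def hv_tens_def)
  moreover have "r = (\<lambda>p. (s p - twist s p) + c p)"
    by (auto simp: s_def c_def twist_def field_simps)
  ultimately show ?thesis
    using skew by (intro bexI[of _ "\<lambda>p. s p - twist s p"] bexI[of _ c])
qed

theorem lemma2p5:
  fixes G :: "'a::field_char_0 set" and r :: "'a hvb \<times> 'a hvb \<Rightarrow> 'a"
  assumes "add_subgroup_Z G"
    and "r \<in> hv_tens G"
    and "\<forall>w\<in>hv_alg G. hv_act w r \<in> skew_im G"
  shows "\<exists>s\<in>skew_im G. \<exists>c\<in>CC_tens G. r = (\<lambda>p. s p + c p)"
proof (rule skew_plus_central)
  show "0 \<in> G" using assms(1) by (simp add: add_subgroup_Z_def)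
  show "r \<in> hv_tens G" by fact
  have ints: "\<forall>n::int. of_int n \<in> G" using assms(1) by (simp add: add_subgroup_Z_def)
  have "finite {p. r p \<noteq> 0}" using assms(2) by (simp add: hv_tens_def)
  then show "\<And>a b. a \<notin> center_basis \<Longrightarrow> r (a, b) + r (b, a) = 0"
    using symmetric_part_noncentral assms(3) ints by blast
qed

end
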